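(* For all integers $n\ge1$ and $r\ge1$: (a) $\displaystyle\sum_{k=1}^{n}(2^k-1)\,\omega(n-k)=\sum_{\substack{m+k=n\\ m\ge1,\ k\ge0}}\Phi(m)\,\Omega_m(k)$; (b) $\displaystyle\sum_{k=1}^{n}\binom{k}{r}\omega(n-k)=\sum_{\substack{m+k=n\\ m\ge1,\ k\ge0}}\Phi_r(m)\,\Omega_m(k)$.
   Context: $\Phi(n)$ is the number of nonempty subsets $A\subseteq\{1,2,\dots,n\}$ with $\gcd(\gcd(A),n)=1$, and $\Phi_r(n)$ is the number of such subsets of cardinality $r$. $\omega:\mathbb{Z}\to\mathbb{Z}$ is defined by $\omega(0)=1$; $\omega(m)=(-1)^j$ if $m=\frac{3j^2\pm j}{2}$ for some integer $j\ge1$; $\omega(m)=0$ otherwise (in particular for $m<0$). For $m\ge1$ and integer $k$, $\Omega_m(k)=\sum_{j\ge0}\omega(k-jm)=\omega(k)+\omega(k-m)+\omega(k-2m)+\cdots$. *)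

theory Defs
  imports Main
begin

definition Phi :: "nat \<Rightarrow> nat" where
  "Phi n = card {A. A \<subseteq> {1..n} \<and> A \<noteq> {} \<and> gcd (Gcd A) n = 1}"

definition Phi_r :: "nat \<Rightarrow> nat \<Rightarrow> nat" where
  "Phi_r r n = card {A. A \<subseteq> {1..n} \<and> A \<noteq> {} \<and> gcd (Gcd A) n = 1 \<and> card A = r}"

text \<open>Pentagonal-number coefficient omega (generalized pentagonal numbers (3j^2 +- j)/2, j >= 1,
  are pairwise distinct, so the j is unique).\<close>
definition omega :: "int \<Rightarrow> int" where
  "omega m = (if m = 0 then 1
     else if (\<exists>j::int. j \<ge> 1 \<and> (2 * m = 3 * j^2 + j \<or> 2 * m = 3 * j^2 - j))
     then (-1) ^ nat (THE j::int. j \<ge> 1 \<and> (2 * m = 3 * j^2 + j \<or> 2 * m = 3 * j^2 - j))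
     else 0)"

text \<open>Omega_m(k) = sum_{j >= 0} omega(k - j m). Terms with j m > k vanish (negative argument),
  so the sum is taken over j = 0 .. (nat k) div m.\<close>
definition Omega :: "nat \<Rightarrow> int \<Rightarrow> int" where
  "Omega m k = (\<Sum>j\<in>{0..nat k div m}. omega (k - int j * int m))"

end

theory Submission
  imports Defs
begin

text \<open>Group the nonempty subsets A of {1..k} by d = gcd (Gcd A) k. Division by d maps those with
  a given d bijectively and cardinality-preservingly onto the nonempty subsets of {1..k/d} that are
  relatively prime to k/d, so 2^k - 1 and k choose r are the divisor sums of Phi and Phi_r.
  Substituting these into the left-hand sides and interchanging summation, the k divisible by m
  are k = (j + 1) m, which produces the inner sum Omega m (n - m). The identity holds with omega
  replaced by any function; no property of the pentagonal numbers is needed.\<close>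

definition nonempty_subsets :: "(nat \<Rightarrow> bool) \<Rightarrow> nat \<Rightarrow> nat set set" where
  "nonempty_subsets P k = {A. A \<subseteq> {1..k} \<and> A \<noteq> {} \<and> P (card A)}"

definition rel_prime_subsets :: "(nat \<Rightarrow> bool) \<Rightarrow> nat \<Rightarrow> nat set set" where
  "rel_prime_subsets P m = {A. A \<in> nonempty_subsets P m \<and> gcd (Gcd A) m = 1}"

lemma finite_nonempty_subsets [simp]: "finite (nonempty_subsets P k)"
  by (rule finite_subset[of _ "Pow {1..k}"]) (auto simp: nonempty_subsets_def)

lemma image_mult_subset_atLeastAtMost_iff:
  fixes d m :: nat
  assumes "0 < d"
  shows "(*) d ` B \<subseteq> {1..d * m} \<longleftrightarrow> B \<subseteq> {1..m}"
  using assms by (auto simp: Suc_le_eq)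

lemma gcd_Gcd_image_mult:
  fixes d m :: nat
  shows "gcd (Gcd ((*) d ` B)) (d * m) = d * gcd (Gcd B) m"
  by (simp add: Gcd_mult gcd_mult_distrib_nat)

lemma image_mult_image_div:
  fixes d :: "'a :: algebraic_semidom"
  assumes "\<And>a. a \<in> A \<Longrightarrow> d dvd a"
  shows "(*) d ` (\<lambda>a. a div d) ` A = A"
proof -
  have "(*) d ` (\<lambda>a. a div d) ` A = (\<lambda>a. a) ` A"
    unfolding image_image by (rule image_cong) (simp_all add: assms)
  then show ?thesis
    by simp
qed

lemma bij_betw_rel_prime_subsets_scale:
  fixes d m :: nat
  assumes "0 < d"
  shows "bij_betw (image ((*) d)) (rel_prime_subsets P m)
           {A \<in> nonempty_subsets P (d * m). gcd (Gcd A) (d * m) = d}"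
proof (rule bij_betw_imageI)
  have inj: "inj ((*) d)"
    using assms by (auto intro: injI)
  then show "inj_on (image ((*) d)) (rel_prime_subsets P m)"
    by (auto simp: inj_on_def inj_image_eq_iff)
  have card_scaled: "card ((*) d ` B) = card B" for B
    using inj by (simp add: card_image inj_on_subset)
  show "image ((*) d) ` rel_prime_subsets P m
          = {A \<in> nonempty_subsets P (d * m). gcd (Gcd A) (d * m) = d}"
  proof (intro equalityI subsetI)
    fix A assume "A \<in> image ((*) d) ` rel_prime_subsets P m"
    then show "A \<in> {A \<in> nonempty_subsets P (d * m). gcd (Gcd A) (d * m) = d}"
      using assms card_scaled
      by (auto simp: rel_prime_subsets_def nonempty_subsets_def gcd_Gcd_image_mult
                     image_mult_subset_atLeastAtMost_iff)
  next
    fix A assume A: "A \<in> {A \<in> nonempty_subsets P (d * m). gcd (Gcd A) (d * m) = d}"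
    then have "d dvd Gcd A"
      by (metis (mono_tags, lifting) gcd_dvd1 mem_Collect_eq)
    then have "d dvd a" if "a \<in> A" for a
      using that by (meson Gcd_dvd dvd_trans)
    define B where "B = (\<lambda>a. a div d) ` A"
    have A_eq: "A = (*) d ` B"
      unfolding B_def by (rule image_mult_image_div[symmetric]) fact
    have "d * gcd (Gcd B) m = d"
      using A by (simp add: A_eq gcd_Gcd_image_mult)
    then have "gcd (Gcd B) m = 1"
      using assms by simp
    then have "B \<in> rel_prime_subsets P m"
      using A assms card_scaled
      by (auto simp: A_eq rel_prime_subsets_def nonempty_subsets_def
                     image_mult_subset_atLeastAtMost_iff)
    then show "A \<in> image ((*) d) ` rel_prime_subsets P m"
      using A_eq by blast
  qed
qed

lemma card_nonempty_subsets_eq_divisor_sum: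
  assumes "0 < k"
  shows "card (nonempty_subsets P k) = (\<Sum>m | m dvd k. card (rel_prime_subsets P m))"
proof -
  let ?quot = "\<lambda>A. k div gcd (Gcd A) k"
  have fiber: "card {A \<in> nonempty_subsets P k. ?quot A = m} = card (rel_prime_subsets P m)"
    if "m dvd k" for m
  proof -
    from that obtain d where k_eq: "k = d * m"
      by (metis dvdE mult.commute)
    with assms have "0 < d" "0 < m"
      by auto
    have "?quot A = m \<longleftrightarrow> gcd (Gcd A) k = d" for A
    proof
      assume "?quot A = m"
      moreover have "gcd (Gcd A) k * ?quot A = k"
        by (rule dvd_mult_div_cancel) simp
      ultimately have "gcd (Gcd A) k * m = d * m"
        using k_eq by simp
      then show "gcd (Gcd A) k = d"
        using \<open>0 < m\<close> by simp
    qed (simp add: k_eq \<open>0 < d\<close>)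
    then have "{A \<in> nonempty_subsets P k. ?quot A = m}
                 = {A \<in> nonempty_subsets P (d * m). gcd (Gcd A) (d * m) = d}"
      unfolding k_eq by blast
    then show ?thesis
      using bij_betw_rel_prime_subsets_scale[OF \<open>0 < d\<close>, of P m]
      by (simp add: bij_betw_same_card)
  qed
  have "?quot A dvd k" for A
    using dvd_div_mult_self[OF gcd_dvd2[of "Gcd A" k]] by (metis dvd_triv_left)
  then have "?quot ` nonempty_subsets P k \<subseteq> {m. m dvd k}"
    by auto
  then have "card (nonempty_subsets P k)
               = (\<Sum>m | m dvd k. card {A \<in> nonempty_subsets P k. ?quot A = m})"
    using sum.group[of "nonempty_subsets P k" "{m. m dvd k}" ?quot "\<lambda>_. 1 :: nat"] assms
    by simp
  also have "\<dots> = (\<Sum>m | m dvd k. card (rel_prime_subsets P m))"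
    using fiber by simp
  finally show ?thesis .
qed

lemma card_nonempty_subsets_True: "card (nonempty_subsets (\<lambda>_. True) k) = 2 ^ k - 1"
proof -
  have "nonempty_subsets (\<lambda>_. True) k = Pow {1..k} - {{}}"
    by (auto simp: nonempty_subsets_def)
  then show ?thesis
    by (simp add: card_Pow)
qed

lemma card_nonempty_subsets_card_eq:
  assumes "0 < r"
  shows "card (nonempty_subsets (\<lambda>c. c = r) k) = k choose r"
proof -
  have "nonempty_subsets (\<lambda>c. c = r) k = {A. A \<subseteq> {1..k} \<and> card A = r}"
    using assms by (auto simp: nonempty_subsets_def)
  then show ?thesis
    by (simp add: n_subsets)
qed

lemma Phi_eq_card_rel_prime_subsets: "Phi m = card (rel_prime_subsets (\<lambda>_. True) m)"
  by (simp add: Phi_def rel_prime_subsets_def nonempty_subsets_def)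

lemma Phi_r_eq_card_rel_prime_subsets: "Phi_r r m = card (rel_prime_subsets (\<lambda>c. c = r) m)"
  unfolding Phi_r_def rel_prime_subsets_def nonempty_subsets_def
  by (rule arg_cong[where f = card]) auto

lemma power_two_minus_one_eq_sum_Phi:
  assumes "0 < k"
  shows "2 ^ k - 1 = (\<Sum>m | m dvd k. Phi m)"
  using card_nonempty_subsets_eq_divisor_sum[OF assms, of "\<lambda>_. True"]
  by (simp add: card_nonempty_subsets_True Phi_eq_card_rel_prime_subsets)

lemma binomial_eq_sum_Phi_r:
  assumes "0 < k" "0 < r"
  shows "k choose r = (\<Sum>m | m dvd k. Phi_r r m)"
  using card_nonempty_subsets_eq_divisor_sum[OF assms(1), of "\<lambda>c. c = r"]
  by (simp add: card_nonempty_subsets_card_eq[OF assms(2)] Phi_r_eq_card_rel_prime_subsets)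

lemma sum_multiples_atLeastAtMost:
  fixes m n :: nat
  assumes "0 < m" "m \<le> n"
  shows "(\<Sum>k | k \<in> {1..n} \<and> m dvd k. h k) = (\<Sum>j=0..(n - m) div m. h (m + j * m))"
proof (rule sum.reindex_bij_witness[where i = "\<lambda>j. m + j * m" and j = "\<lambda>k. k div m - 1"])
  fix j assume "j \<in> {0..(n - m) div m}"
  then have "j * m \<le> n - m"
    using assms(1) less_eq_div_iff_mult_less_eq by auto
  then show "m + j * m \<in> {k. k \<in> {1..n} \<and> m dvd k}"
    using assms by auto
  show "(m + j * m) div m - 1 = j"
    using assms(1) by simp
next
  fix k assume "k \<in> {k. k \<in> {1..n} \<and> m dvd k}"
  then obtain c where k: "k = c * m" "1 \<le> c" "c * m \<le> n"
    by (auto elim!: dvdE simp: mult.commute)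
  then have "m + (k div m - 1) * m = k"
    using assms(1) by (simp add: diff_mult_distrib)
  then show "m + (k div m - 1) * m = k" "h (m + (k div m - 1) * m) = h k"
    by simp_all
  have "(c - 1) * m \<le> n - m"
    using k by (simp add: diff_mult_distrib)
  then show "k div m - 1 \<in> {0..(n - m) div m}"
    using k assms(1) less_eq_div_iff_mult_less_eq by auto
qed

lemma divisor_sum_convolution:
  fixes F P :: "nat \<Rightarrow> 'a :: comm_semiring_1" and g :: "nat \<Rightarrow> 'a"
  assumes "\<And>k. k \<in> {1..n} \<Longrightarrow> F k = (\<Sum>m | m dvd k. P m)"
  shows "(\<Sum>k=1..n. F k * g (n - k))
           = (\<Sum>m=1..n. P m * (\<Sum>j=0..(n - m) div m. g (n - m - j * m)))"
proof -
  have "(\<Sum>k=1..n. F k * g (n - k)) = (\<Sum>k=1..n. \<Sum>m | m \<in> {1..n} \<and> m dvd k. P m * g (n - k))"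
  proof (rule sum.cong[OF refl])
    fix k assume k: "k \<in> {1..n}"
    then have "{m. m dvd k} = {m. m \<in> {1..n} \<and> m dvd k}"
      by (auto dest: dvd_imp_le)
    then show "F k * g (n - k) = (\<Sum>m | m \<in> {1..n} \<and> m dvd k. P m * g (n - k))"
      using assms[OF k] by (simp add: sum_distrib_right)
  qed
  also have "\<dots> = (\<Sum>m=1..n. \<Sum>k | k \<in> {1..n} \<and> m dvd k. P m * g (n - k))"
    by (rule sum.swap_restrict) auto
  also have "\<dots> = (\<Sum>m=1..n. P m * (\<Sum>j=0..(n - m) div m. g (n - m - j * m)))"
  proof (rule sum.cong[OF refl])
    fix m assume "m \<in> {1..n}"
    then have "(\<Sum>k | k \<in> {1..n} \<and> m dvd k. P m * g (n - k))
                 = (\<Sum>j=0..(n - m) div m. P m * g (n - (m + j * m)))"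
      by (intro sum_multiples_atLeastAtMost) auto
    then show "(\<Sum>k | k \<in> {1..n} \<and> m dvd k. P m * g (n - k))
                 = P m * (\<Sum>j=0..(n - m) div m. g (n - m - j * m))"
      by (simp add: sum_distrib_left)
  qed
  finally show ?thesis .
qed

lemma Omega_of_nat: "Omega m (int k) = (\<Sum>j=0..k div m. omega (int (k - j * m)))"
proof -
  have "j * m \<le> k" if "j \<le> k div m" for j
    using that div_times_less_eq_dividend[of k m] mult_le_mono1[of j "k div m" m]
    by linarith
  then show ?thesis
    by (auto simp: Omega_def of_nat_diff intro!: sum.cong)
qed

lemma omega_divisor_sum_convolution:
  fixes F P :: "nat \<Rightarrow> int"
  assumes "\<And>k. k \<in> {1..n} \<Longrightarrow> F k = (\<Sum>m | m dvd k. P m)"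
  shows "(\<Sum>k=1..n. F k * omega (int n - int k)) = (\<Sum>m=1..n. P m * Omega m (int n - int m))"
proof -
  have "(\<Sum>k=1..n. F k * omega (int n - int k)) = (\<Sum>k=1..n. F k * omega (int (n - k)))"
    by (intro sum.cong) (auto simp: of_nat_diff)
  also have "\<dots> = (\<Sum>m=1..n. P m * (\<Sum>j=0..(n - m) div m. omega (int (n - m - j * m))))"
    using divisor_sum_convolution[of n F P "\<lambda>i. omega (int i)"] assms by simp
  also have "\<dots> = (\<Sum>m=1..n. P m * Omega m (int n - int m))"
    by (intro sum.cong) (auto simp: Omega_of_nat simp flip: of_nat_diff)
  finally show ?thesis .
qed

theorem mainTheorem13:
  fixes n r :: nat
  assumes "n \<ge> 1" and "r \<ge> 1"
  shows "(\<Sum>k=1..n. ((2::int)^k - 1) * omega (int n - int k))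
           = (\<Sum>m=1..n. int (Phi m) * Omega m (int n - int m))
       \<and> (\<Sum>k=1..n. int (k choose r) * omega (int n - int k))
           = (\<Sum>m=1..n. int (Phi_r r m) * Omega m (int n - int m))"
proof
  show "(\<Sum>k=1..n. ((2::int)^k - 1) * omega (int n - int k))
          = (\<Sum>m=1..n. int (Phi m) * Omega m (int n - int m))"
  proof (rule omega_divisor_sum_convolution)
    fix k :: nat assume "k \<in> {1..n}"
    then have "int (2 ^ k - 1) = int (\<Sum>m | m dvd k. Phi m)"
      by (subst power_two_minus_one_eq_sum_Phi) simp_all
    then show "(2::int) ^ k - 1 = (\<Sum>m | m dvd k. int (Phi m))"
      by (simp add: of_nat_diff)
  qed
  show "(\<Sum>k=1..n. int (k choose r) * omega (int n - int k))
          = (\<Sum>m=1..n. int (Phi_r r m) * Omega m (int n - int m))"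
  proof (rule omega_divisor_sum_convolution)
    fix k :: nat assume "k \<in> {1..n}"
    then show "int (k choose r) = (\<Sum>m | m dvd k. int (Phi_r r m))"
      using assms(2) by (simp add: binomial_eq_sum_Phi_r)
  qed
qed

end
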